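(* Let $\mathcal{E}$ be a time-translation covariant channel on $S$, let $\rho$ be a state and $\sigma=\mathcal{E}(\rho)$, and let $P_{x'|x}=\langle x'|\mathcal{E}(|x\rangle\langle x|)|x'\rangle$. Then for all $x',y'$, $$|\sigma_{x'y'}|\le\sum_{x,y:\ E_x-E_y=E_{x'}-E_{y'}}\sqrt{P_{x'|x}P_{y'|y}}\;|\rho_{xy}|,$$ where $\rho_{xy}=\langle x|\rho|y\rangle$ and $\sigma_{x'y'}=\langle x'|\sigma|y'\rangle$.
   Context: $S$ is an $n$-dimensional system with non-degenerate Hamiltonian $H_S=\sum_xE_x|x\rangle\langle x|$. $\mathcal{U}_t(X)=e^{-iH_St}Xe^{iH_St}$. A channel (completely positive trace-preserving map) $\mathcal{E}$ is time-translation covariant if $\mathcal{E}\circ\mathcal{U}_t=\mathcal{U}_t\circ\mathcal{E}$ for all $t\in\mathbb{R}$. *)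

theory Defs
  imports "HOL-Analysis.Analysis"
begin

text \<open>Operators on the n-dimensional system S are represented by their matrix
 in the energy eigenbasis: functions 'n \<Rightarrow> 'n \<Rightarrow> complex with 'n a finite
 index type, n = CARD('n). A x y = <x|A|y>.\<close>

type_synonym 'n op = "'n \<Rightarrow> 'n \<Rightarrow> complex"

definition psd_on :: "'i set \<Rightarrow> ('i \<Rightarrow> 'i \<Rightarrow> complex) \<Rightarrow> bool" where
  "psd_on I A \<longleftrightarrow> (\<forall>v :: 'i \<Rightarrow> complex.
     let q = (\<Sum>i\<in>I. \<Sum>j\<in>I. cnj (v i) * A i j * v j) in Im q = 0 \<and> Re q \<ge> 0)"

definition trace_op :: "('n::finite) op \<Rightarrow> complex" where
  "trace_op A = (\<Sum>i\<in>UNIV. A i i)"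

definition is_state :: "('n::finite) op \<Rightarrow> bool" where
  "is_state \<rho> \<longleftrightarrow> psd_on UNIV \<rho> \<and> trace_op \<rho> = 1"

definition lin_map :: "(('n::finite) op \<Rightarrow> 'n op) \<Rightarrow> bool" where
  "lin_map \<E> \<longleftrightarrow> (\<forall>(c::complex) X Y.
     \<E> (\<lambda>i j. c * X i j + Y i j) = (\<lambda>i j. c * \<E> X i j + \<E> Y i j))"

text \<open>Complete positivity: id_m \<otimes> \<E> is positive for every ancilla dimension m.
 Operators on C^m \<otimes> S are matrices indexed by pairs (i,a), i < m; (id \<otimes> \<E>) acts
 blockwise.\<close>
definition completely_positive :: "(('n::finite) op \<Rightarrow> 'n op) \<Rightarrow> bool" where
  "completely_positive \<E> \<longleftrightarrow> (\<forall>(m::nat) (X :: nat \<times> 'n \<Rightarrow> nat \<times> 'n \<Rightarrow> complex).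
     psd_on ({..<m} \<times> UNIV) X \<longrightarrow>
     psd_on ({..<m} \<times> UNIV)
       (\<lambda>(i, a) (j, b). \<E> (\<lambda>a' b'. X (i, a') (j, b')) a b))"

definition trace_preserving :: "(('n::finite) op \<Rightarrow> 'n op) \<Rightarrow> bool" where
  "trace_preserving \<E> \<longleftrightarrow> (\<forall>X. trace_op (\<E> X) = trace_op X)"

definition channel :: "(('n::finite) op \<Rightarrow> 'n op) \<Rightarrow> bool" where
  "channel \<E> \<longleftrightarrow> lin_map \<E> \<and> completely_positive \<E> \<and> trace_preserving \<E>"

text \<open>U_t(X) = e^{-i H t} X e^{i H t} with H = \<Sum>_x E_x |x><x|, written out entrywise.\<close>
definition evol :: "('n \<Rightarrow> real) \<Rightarrow> real \<Rightarrow> 'n op \<Rightarrow> 'n op" where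
  "evol En t X = (\<lambda>x y. exp (- \<i> * complex_of_real (En x * t)) * X x y
                        * exp (\<i> * complex_of_real (En y * t)))"

definition time_covariant :: "('n \<Rightarrow> real) \<Rightarrow> (('n::finite) op \<Rightarrow> 'n op) \<Rightarrow> bool" where
  "time_covariant En \<E> \<longleftrightarrow> (\<forall>t::real. \<E> \<circ> evol En t = evol En t \<circ> \<E>)"

definition ketbra :: "'n \<Rightarrow> 'n \<Rightarrow> 'n op" where
  "ketbra x y = (\<lambda>i j. if i = x \<and> j = y then 1 else 0)"

definition trans_prob :: "(('n::finite) op \<Rightarrow> 'n op) \<Rightarrow> 'n \<Rightarrow> 'n \<Rightarrow> complex" where
  "trans_prob \<E> x' x = \<E> (ketbra x x) x' x'"

end

theory Submission
  imports Defs
begin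

(* Expand rho in the matrix units |x><y|. Covariance multiplies |x><y| by the phase
   exp(-i (E_x - E_y) t) and the entry <x'|.|y'> by exp(-i (E_x' - E_y') t), so
   <x'|E(|x><y|)|y'> vanishes unless the two Bohr frequencies agree. For the surviving
   terms, complete positivity applied to the rank-one operator |psi><psi| with
   psi = |0,x> + |1,y> yields a positive block matrix with diagonal entries P_{x'|x},
   P_{y'|y} and off-diagonal entry <x'|E(|x><y|)|y'>, and the 2x2 Cauchy-Schwarz bound
   finishes. *)

lemma quadratic_nonneg_imp_discrim_nonpos:
  fixes a b c :: real
  assumes "0 \<le> a" "\<And>t. 0 \<le> a * t\<^sup>2 + 2 * b * t + c"
  shows "b\<^sup>2 \<le> a * c"
proof (cases "a = 0")
  case True
  have "b = 0"
  proof (rule ccontr)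
    assume "b \<noteq> 0"
    have "0 \<le> 2 * b * (- (c + 1) / (2 * b)) + c"
      using assms(2)[of "- (c + 1) / (2 * b)"] True by simp
    also have "\<dots> = -1" using \<open>b \<noteq> 0\<close> by (simp add: field_simps)
    finally show False by simp
  qed
  with True show ?thesis by simp
next
  case False
  with assms(1) have "0 < a" by simp
  have "0 \<le> a * (- b / a)\<^sup>2 + 2 * b * (- b / a) + c" by (rule assms(2))
  also have "\<dots> = (a * c - b\<^sup>2) / a" using \<open>0 < a\<close> by (simp add: field_simps power2_eq_square)
  finally show ?thesis using \<open>0 < a\<close> by (simp add: zero_le_divide_iff)
qed

lemma psd_on_two_points:
  fixes \<alpha> \<beta> :: complex
  assumes "psd_on I A" "finite I" "p \<in> I" "q \<in> I" "p \<noteq> q"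
  defines "Q \<equiv> cnj \<alpha> * A p p * \<alpha> + cnj \<alpha> * A p q * \<beta> + cnj \<beta> * A q p * \<alpha> + cnj \<beta> * A q q * \<beta>"
  shows "Im Q = 0 \<and> 0 \<le> Re Q"
proof -
  define v where "v i = (if i = p then \<alpha> else if i = q then \<beta> else 0)" for i
  have "(\<Sum>i\<in>I. \<Sum>j\<in>I. cnj (v i) * A i j * v j)
      = (\<Sum>i\<in>{p, q}. \<Sum>j\<in>{p, q}. cnj (v i) * A i j * v j)"
    using assms(2-4)
    by (intro sum.mono_neutral_cong_right) (auto simp: v_def intro!: sum.mono_neutral_right)
  also have "\<dots> = Q" using assms(5) by (simp add: v_def Q_def)
  finally show ?thesis using assms(1) unfolding psd_on_def Let_def by metis
qed

lemma psd_on_rank_one: "psd_on I (\<lambda>i j. cnj (u i) * u j)"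
  unfolding psd_on_def Let_def
proof (intro allI)
  fix v :: "'a \<Rightarrow> complex"
  define s where "s = (\<Sum>j\<in>I. u j * v j)"
  have "(\<Sum>i\<in>I. \<Sum>j\<in>I. cnj (v i) * (cnj (u i) * u j) * v j) = cnj s * s"
    unfolding s_def cnj_sum sum_product by (simp add: mult_ac)
  also have "\<dots> = complex_of_real ((cmod s)\<^sup>2)"
    by (simp only: complex_norm_square mult.commute)
  finally show "Im (\<Sum>i\<in>I. \<Sum>j\<in>I. cnj (v i) * (cnj (u i) * u j) * v j) = 0 \<and>
      0 \<le> Re (\<Sum>i\<in>I. \<Sum>j\<in>I. cnj (v i) * (cnj (u i) * u j) * v j)" by simp
qed

lemma psd_on_offdiag_bound:
  assumes psd: "psd_on I A" and "finite I" "p \<in> I" "q \<in> I" "p \<noteq> q"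
  shows "cmod (A p q) \<le> sqrt (Re (A p p) * Re (A q q))"
proof -
  note Q = psd_on_two_points[OF assms]
  define a b c where "a = Re (A p p)" and "b = Re (A q q)" and "c = A p q"
  have App: "A p p = complex_of_real a" and a0: "0 \<le> a"
    using Q[of 1 0] unfolding a_def by (simp_all add: complex_eq_iff)
  have Aqq: "A q q = complex_of_real b" and b0: "0 \<le> b"
    using Q[of 0 1] unfolding b_def by (simp_all add: complex_eq_iff)
  have "Im (A p q + A q p) = 0" using Q[of 1 1] App Aqq by simp
  moreover have "Re (A p q) = Re (A q p)" using Q[of 1 \<i>] App Aqq by (simp add: algebra_simps)
  ultimately have Aqp: "A q p = cnj c" unfolding c_def by (simp add: complex_eq_iff)
  have "0 \<le> a * t\<^sup>2 + 2 * (- (cmod c)\<^sup>2) * t + (cmod c)\<^sup>2 * b" for t :: real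
    using conjunct2[OF Q[of "complex_of_real t" "- cnj c"]]
    unfolding App Aqq Aqp c_def[symmetric] cmod_power2
    by (simp add: algebra_simps power2_eq_square)
  then have "(- (cmod c)\<^sup>2)\<^sup>2 \<le> a * ((cmod c)\<^sup>2 * b)"
    by (rule quadratic_nonneg_imp_discrim_nonpos[OF a0])
  then have "(cmod c)\<^sup>2 \<le> a * b"
    by (cases "c = 0") (auto simp: a0 b0 power2_eq_square)
  then show ?thesis unfolding a_def b_def c_def by (simp add: real_le_rsqrt)
qed

lemma lin_map_zero:
  assumes "lin_map \<E>"
  shows "\<E> (\<lambda>i j. 0) = (\<lambda>i j. 0)"
  using assms[unfolded lin_map_def, rule_format, of "-1" "\<lambda>i j. 0" "\<lambda>i j. 0"] by simp

lemma lin_map_scale: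
  assumes "lin_map \<E>"
  shows "\<E> (\<lambda>i j. c * X i j) = (\<lambda>i j. c * \<E> X i j)"
  using assms[unfolded lin_map_def, rule_format, of c X "\<lambda>i j. 0"] lin_map_zero[OF assms] by simp

lemma lin_map_sum:
  assumes lin: "lin_map \<E>" and "finite S"
  shows "\<E> (\<lambda>i j. \<Sum>p\<in>S. c p * K p i j) = (\<lambda>i j. \<Sum>p\<in>S. c p * \<E> (K p) i j)"
  using assms(2)
proof (induction S rule: finite_induct)
  case empty
  then show ?case using lin_map_zero[OF lin] by simp
next
  case (insert a S)
  then show ?case
    using lin[unfolded lin_map_def, rule_format, of "c a" "K a" "\<lambda>i j. \<Sum>p\<in>S. c p * K p i j"]
    by simp
qed

lemma op_eq_sum_ketbra:
  fixes \<rho> :: "('n::finite) op"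
  shows "\<rho> = (\<lambda>i j. \<Sum>(x, y)\<in>UNIV. \<rho> x y * ketbra x y i j)"
proof (intro ext)
  fix i j
  have "(\<Sum>(x, y)\<in>UNIV. \<rho> x y * ketbra x y i j) = (\<Sum>p\<in>UNIV. if p = (i, j) then \<rho> i j else 0)"
    by (rule sum.cong) (auto simp: ketbra_def split: if_splits)
  then show "\<rho> i j = (\<Sum>(x, y)\<in>UNIV. \<rho> x y * ketbra x y i j)" by simp
qed

lemma lin_map_entry_expansion:
  fixes \<E> :: "('n::finite) op \<Rightarrow> 'n op"
  assumes "lin_map \<E>"
  shows "\<E> \<rho> x' y' = (\<Sum>(x, y)\<in>UNIV. \<rho> x y * \<E> (ketbra x y) x' y')"
proof -
  have "\<E> \<rho> = \<E> (\<lambda>i j. \<Sum>p\<in>UNIV. \<rho> (fst p) (snd p) * ketbra (fst p) (snd p) i j)"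
    by (subst op_eq_sum_ketbra) (simp add: case_prod_beta)
  also have "\<dots> = (\<lambda>i j. \<Sum>p\<in>UNIV. \<rho> (fst p) (snd p) * \<E> (ketbra (fst p) (snd p)) i j)"
    by (rule lin_map_sum[OF assms]) simp
  finally show ?thesis by (simp add: case_prod_beta)
qed

lemma evol_entry: "evol En t X x y = exp (- \<i> * complex_of_real ((En x - En y) * t)) * X x y"
proof -
  have "- \<i> * complex_of_real ((En x - En y) * t)
      = - \<i> * complex_of_real (En x * t) + \<i> * complex_of_real (En y * t)"
    by (simp add: algebra_simps)
  then have "exp (- \<i> * complex_of_real ((En x - En y) * t))
      = exp (- \<i> * complex_of_real (En x * t)) * exp (\<i> * complex_of_real (En y * t))"
    by (simp only: exp_add)
  then show ?thesis unfolding evol_def by (simp add: mult_ac)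
qed

lemma phase_eq_imp_zero:
  fixes a b :: real and c :: complex
  assumes "a \<noteq> b"
    and "\<And>t. exp (- \<i> * complex_of_real (a * t)) * c = exp (- \<i> * complex_of_real (b * t)) * c"
  shows "c = 0"
proof -
  define t where "t = pi / (a - b)"
  have "- \<i> * complex_of_real (a * t) = - \<i> * complex_of_real (b * t) + - (\<i> * pi)"
    using assms(1) by (simp add: t_def field_simps)
  then have "exp (- \<i> * complex_of_real (a * t))
      = exp (- \<i> * complex_of_real (b * t)) * exp (- (\<i> * pi))"
    by (simp only: exp_add)
  also have "exp (- (\<i> * pi)) = -1"
    by (simp add: exp_minus exp_pi_i')
  finally show ?thesis using assms(2)[of t] by simp
qed

lemma time_covariant_offresonant_zero:
  fixes \<E> :: "('n::finite) op \<Rightarrow> 'n op"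
  assumes lin: "lin_map \<E>" and cov: "time_covariant En \<E>"
    and "En x - En y \<noteq> En x' - En y'"
  shows "\<E> (ketbra x y) x' y' = 0"
proof (rule phase_eq_imp_zero[OF assms(3)])
  fix t
  have "evol En t (ketbra x y)
      = (\<lambda>i j. exp (- \<i> * complex_of_real ((En x - En y) * t)) * ketbra x y i j)"
    by (auto simp: fun_eq_iff evol_entry ketbra_def)
  then have "exp (- \<i> * complex_of_real ((En x - En y) * t)) * \<E> (ketbra x y) x' y'
      = \<E> (evol En t (ketbra x y)) x' y'"
    by (simp add: lin_map_scale[OF lin])
  also have "\<dots> = evol En t (\<E> (ketbra x y)) x' y'"
    using cov unfolding time_covariant_def by (metis comp_apply)
  also have "\<dots> = exp (- \<i> * complex_of_real ((En x' - En y') * t)) * \<E> (ketbra x y) x' y'"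
    by (rule evol_entry)
  finally show "exp (- \<i> * complex_of_real ((En x - En y) * t)) * \<E> (ketbra x y) x' y'
      = exp (- \<i> * complex_of_real ((En x' - En y') * t)) * \<E> (ketbra x y) x' y'" .
qed

lemma completely_positive_coherence_bound:
  fixes \<E> :: "('n::finite) op \<Rightarrow> 'n op"
  assumes "completely_positive \<E>"
  shows "cmod (\<E> (ketbra x y) x' y') \<le> sqrt (Re (trans_prob \<E> x' x) * Re (trans_prob \<E> y' y))"
proof -
  define u :: "nat \<times> 'n \<Rightarrow> complex"
    where "u p = (if p = (0, x) \<or> p = (1, y) then 1 else 0)" for p
  define Y where "Y = (\<lambda>(i, a) (j, b). \<E> (\<lambda>a' b'. cnj (u (i, a')) * u (j, b')) a b)"
  have "psd_on ({..<2} \<times> UNIV) Y"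
    using assms psd_on_rank_one unfolding completely_positive_def Y_def by blast
  then have "cmod (Y (0, x') (1, y')) \<le> sqrt (Re (Y (0, x') (0, x')) * Re (Y (1, y') (1, y')))"
    by (rule psd_on_offdiag_bound) auto
  moreover have "(\<lambda>a' b'. cnj (u (i, a')) * u (j, b'))
      = ketbra (if i = 0 then x else y) (if j = 0 then x else y)" if "i < 2" "j < 2" for i j :: nat
    using that by (auto simp: u_def ketbra_def fun_eq_iff)
  ultimately show ?thesis by (simp add: Y_def trans_prob_def)
qed

theorem mainTheorem15:
  fixes En :: "'n::finite \<Rightarrow> real"
    and \<E> :: "'n op \<Rightarrow> 'n op"
    and \<rho> :: "'n op"
    and x' y' :: 'n
  assumes nondeg: "inj En"
    and chan: "channel \<E>"
    and cov: "time_covariant En \<E>"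
    and state: "is_state \<rho>"
  shows "cmod (\<E> \<rho> x' y') \<le>
    (\<Sum>(x, y) \<in> {(x, y). En x - En y = En x' - En y'}.
       sqrt (Re (trans_prob \<E> x' x) * Re (trans_prob \<E> y' y)) * cmod (\<rho> x y))"
proof -
  have lin: "lin_map \<E>" and cp: "completely_positive \<E>"
    using chan unfolding channel_def by auto
  have "cmod (\<E> \<rho> x' y') \<le> (\<Sum>(x, y)\<in>UNIV. cmod (\<rho> x y * \<E> (ketbra x y) x' y'))"
    unfolding lin_map_entry_expansion[OF lin, of \<rho>] case_prod_beta by (rule norm_sum)
  also have "\<dots> = (\<Sum>(x, y)\<in>{(x, y). En x - En y = En x' - En y'}.
      cmod (\<rho> x y * \<E> (ketbra x y) x' y'))"
    by (rule sum.mono_neutral_right) (auto, metis time_covariant_offresonant_zero[OF lin cov])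
  also have "\<dots> \<le> (\<Sum>(x, y) \<in> {(x, y). En x - En y = En x' - En y'}.
       sqrt (Re (trans_prob \<E> x' x) * Re (trans_prob \<E> y' y)) * cmod (\<rho> x y))"
  proof (rule sum_mono, clarify)
    fix x y
    show "cmod (\<rho> x y * \<E> (ketbra x y) x' y')
        \<le> sqrt (Re (trans_prob \<E> x' x) * Re (trans_prob \<E> y' y)) * cmod (\<rho> x y)"
      unfolding norm_mult mult.commute[of "cmod (\<rho> x y)"]
      by (rule mult_right_mono[OF completely_positive_coherence_bound[OF cp]]) simp
  qed
  finally show ?thesis .
qed

end
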